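(* Let $n\ge 1$ and let $a_1,\dots,a_n\ge 2$ be integers. Let $\mathbb{E}=(a_i\delta_{i,j}+\delta_{i+1,j})_{i,j=1}^n$ (the upper bidiagonal $n\times n$ matrix with diagonal $a_1,\dots,a_n$ and all superdiagonal entries $1$). For $\mathbf{k}=(k_1,\dots,k_n)\in\mathbb{Z}^n$ define rational numbers $\omega^{(n)}_{\mathbf{k},1},\dots,\omega^{(n)}_{\mathbf{k},n}$ by $$(\omega^{(n)}_{\mathbf{k},1},\dots,\omega^{(n)}_{\mathbf{k},n}):=(k_1+1,\dots,k_n+1)\,\mathbb{E}^{-T},$$ where $\mathbb{E}^{-T}=(\mathbb{E}^{-1})^T$. Then for every $\mathbf{k}$ with $0\le k_i\le a_i-1$ for $i=1,\dots,n-1$ and $0\le k_n\le a_n-2$, one has $0<\omega^{(n)}_{\mathbf{k},i}<1$ for all $i=1,\dots,n$. Moreover, setting $\mathbf{k}^\ast:=(a_1-1,\dots,a_{n-1}-1,a_n-2)-\mathbf{k}$, one has $$\omega^{(n)}_{\mathbf{k}^\ast,i}=1-\omega^{(n)}_{\mathbf{k},i},\qquad i=1,\dots,n.$$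
   Context: $\mathbb{E}$ is the exponent matrix of the chain-type polynomial $f_n=z_1^{a_1}z_2+z_2^{a_2}z_3+\cdots+z_{n-1}^{a_{n-1}}z_n+z_n^{a_n}$. *)

theory Defs
  imports "Jordan_Normal_Form.Matrix"
begin

definition inv_mat :: "'a::field mat \<Rightarrow> 'a mat" where
  "inv_mat A = (SOME B. B \<in> carrier_mat (dim_row A) (dim_row A) \<and>
      A * B = 1\<^sub>m (dim_row A) \<and> B * A = 1\<^sub>m (dim_row A))"

text \<open>Exponent matrix E = (a_i delta_{i,j} + delta_{i+1,j}), i,j = 1..n.
  Mathematical indices 1..n correspond to JNF indices 0..n-1; the sequence a is
  indexed from 1, i.e. a 1, ..., a n.\<close>
definition exp_mat :: "nat \<Rightarrow> (nat \<Rightarrow> int) \<Rightarrow> rat mat" where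
  "exp_mat n a = mat n n (\<lambda>(i, j).
      (if i = j then rat_of_int (a (i + 1)) else 0) + (if j = i + 1 then 1 else 0))"

definition omega :: "nat \<Rightarrow> (nat \<Rightarrow> int) \<Rightarrow> (nat \<Rightarrow> int) \<Rightarrow> nat \<Rightarrow> rat" where
  "omega n a k i =
     (mat 1 n (\<lambda>(_, j). rat_of_int (k (j + 1) + 1)) * transpose_mat (inv_mat (exp_mat n a))) $$ (0, i - 1)"

end

theory Submission imports Defs "Jordan_Normal_Form.Determinant" begin

text \<open>Read entrywise, the defining identity \<open>\<omega> E\<^sup>T = (k + 1)\<close> is the triangular chain system
  \<open>a i * \<omega> i + \<omega> (i + 1) = k i + 1\<close> for \<open>i < n\<close> and \<open>a n * \<omega> n = k n + 1\<close>.
  Solving it from the bottom up, \<open>\<omega> i = (k i + 1 - \<omega> (i + 1)) / a i\<close> with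
  \<open>0 < k i + 1 - \<omega> (i + 1) < a i\<close>, so every \<open>\<omega> i\<close> lies in \<open>(0, 1)\<close>. The system for
  \<open>k\<^sup>*\<close> is solved by \<open>1 - \<omega>\<close>, and since all \<open>a i\<close> are nonzero its solution is unique.\<close>

definition solves_chain :: "nat \<Rightarrow> (nat \<Rightarrow> int) \<Rightarrow> (nat \<Rightarrow> int) \<Rightarrow> (nat \<Rightarrow> rat) \<Rightarrow> bool" where
  "solves_chain n a k w \<longleftrightarrow>
     (\<forall>i\<in>{1..<n}. rat_of_int (a i) * w i + w (i + 1) = rat_of_int (k i) + 1) \<and>
     rat_of_int (a n) * w n = rat_of_int (k n) + 1"

lemma solves_chain_unique:
  assumes a: "\<forall>i\<in>{1..n}. a i \<noteq> 0"
    and v: "solves_chain n a k v" and w: "solves_chain n a k w"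
    and i: "i \<in> {1..n}"
  shows "v i = w i"
proof -
  have "i \<le> n" using i by simp
  then show ?thesis
  proof (induction i rule: inc_induct)
    case base
    have "rat_of_int (a n) * v n = rat_of_int (a n) * w n"
      using v w by (simp add: solves_chain_def)
    then show ?case using a i by auto
  next
    case (step m)
    have "m \<in> {1..<n}" using step.hyps i by auto
    then have "rat_of_int (a m) * v m + v (m + 1) = rat_of_int (a m) * w m + w (m + 1)"
      using v w by (simp add: solves_chain_def)
    then have "rat_of_int (a m) * v m = rat_of_int (a m) * w m"
      using step.IH by simp
    then show ?case using a \<open>m \<in> {1..<n}\<close> by auto
  qed
qed

lemma pos_less_one_of_mult_eq:
  fixes c x y :: "'a::linordered_field"
  assumes "0 < c" and "c * x = y" and "0 < y" and "y < c"
  shows "0 < x \<and> x < 1"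
proof
  show "0 < x" using assms(1-3) by (metis zero_less_mult_pos)
  show "x < 1" using assms(1,2,4) by (metis mult.right_neutral mult_less_cancel_left_pos)
qed

lemma solves_chain_bounds:
  assumes a: "\<forall>i\<in>{1..n}. a i \<ge> 2"
    and k: "\<forall>i\<in>{1..n-1}. 0 \<le> k i \<and> k i \<le> a i - 1" "0 \<le> k n" "k n \<le> a n - 2"
    and w: "solves_chain n a k w"
    and i: "i \<in> {1..n}"
  shows "0 < w i \<and> w i < 1"
proof -
  have "i \<le> n" using i by simp
  then show ?thesis
  proof (induction i rule: inc_induct)
    case base
    have "rat_of_int (a n) * w n = rat_of_int (k n) + 1"
      using w by (simp add: solves_chain_def)
    then show ?case
      by (rule pos_less_one_of_mult_eq[rotated]) (use a i k in force)+
  next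
    case (step m)
    have m: "m \<in> {1..<n}" using step.hyps i by auto
    then have "rat_of_int (a m) * w m = rat_of_int (k m) + 1 - w (m + 1)"
      using w by (simp add: solves_chain_def algebra_simps)
    then show ?case
      by (rule pos_less_one_of_mult_eq[rotated]) (use a k m step.IH in force)+
  qed
qed

lemma solves_chain_complement:
  assumes "solves_chain n a k w"
  shows "solves_chain n a (\<lambda>j. (if j = n then a n - 2 else a j - 1) - k j) (\<lambda>i. 1 - w i)"
  using assms by (auto simp: solves_chain_def algebra_simps)

lemma inv_mat_of_det_nonzero:
  fixes A :: "'a::field mat"
  assumes A: "A \<in> carrier_mat n n" and "det A \<noteq> 0"
  shows "inv_mat A \<in> carrier_mat n n" "A * inv_mat A = 1\<^sub>m n" "inv_mat A * A = 1\<^sub>m n"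
proof -
  from det_non_zero_imp_unit[OF assms, of "()"]
  obtain B where "B \<in> carrier_mat n n" "B * A = 1\<^sub>m n" "A * B = 1\<^sub>m n"
    unfolding Units_def ring_mat_def by auto
  then have "\<exists>B. B \<in> carrier_mat (dim_row A) (dim_row A) \<and>
      A * B = 1\<^sub>m (dim_row A) \<and> B * A = 1\<^sub>m (dim_row A)" using A by auto
  from someI_ex[OF this] show "inv_mat A \<in> carrier_mat n n" "A * inv_mat A = 1\<^sub>m n" "inv_mat A * A = 1\<^sub>m n"
    using A unfolding inv_mat_def by auto
qed

lemma exp_mat_carrier: "exp_mat n a \<in> carrier_mat n n"
  by (simp add: exp_mat_def)

lemma det_exp_mat: "det (exp_mat n a) = (\<Prod>i=1..n. rat_of_int (a i))"
proof -
  have "upper_triangular (exp_mat n a)"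
    by (auto simp: upper_triangular_def exp_mat_def)
  then have "det (exp_mat n a) = prod_list (diag_mat (exp_mat n a))"
    using det_upper_triangular exp_mat_carrier by blast
  also have "diag_mat (exp_mat n a) = map (\<lambda>i. rat_of_int (a (i + 1))) [0..<n]"
    unfolding diag_mat_def exp_mat_def by (rule map_cong) auto
  also have "prod_list \<dots> = (\<Prod>i=1..n. rat_of_int (a i))"
    by (simp add: prod.distinct_set_conv_list[symmetric] atLeast0LessThan prod.atLeast1_atMost_eq)
  finally show ?thesis .
qed

lemma row_mult_transpose_exp_mat:
  assumes "R \<in> carrier_mat 1 n" and "j < n"
  shows "(R * transpose_mat (exp_mat n a)) $$ (0, j) =
    rat_of_int (a (j + 1)) * R $$ (0, j) + (if j + 1 < n then R $$ (0, j + 1) else 0)"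
proof -
  have "(R * transpose_mat (exp_mat n a)) $$ (0, j) =
      (\<Sum>l<n. R $$ (0, l) * ((if j = l then rat_of_int (a (j + 1)) else 0) + (if l = j + 1 then 1 else 0)))"
    using assms by (simp add: exp_mat_def scalar_prod_def lessThan_atLeast0 row_def col_def)
  also have "\<dots> = (\<Sum>l<n. if l = j then rat_of_int (a (j + 1)) * R $$ (0, j) else 0)
      + (\<Sum>l<n. if l = j + 1 then R $$ (0, j + 1) else 0)"
    unfolding sum.distrib[symmetric] by (rule sum.cong) auto
  finally show ?thesis using assms(2) by simp
qed

lemma omega_solves_chain:
  assumes "n \<ge> 1" and "\<forall>i\<in>{1..n}. a i \<noteq> 0"
  shows "solves_chain n a k (omega n a k)"
proof -
  let ?E = "exp_mat n a"
  define V where "V = mat 1 n (\<lambda>(_, j). rat_of_int (k (j + 1) + 1))"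
  define W where "W = V * transpose_mat (inv_mat ?E)"
  have "det ?E \<noteq> 0" using assms(2) by (simp add: det_exp_mat)
  note inv = inv_mat_of_det_nonzero[OF exp_mat_carrier this]
  have W: "W \<in> carrier_mat 1 n"
    using inv(1) unfolding W_def V_def by (intro mult_carrier_mat[of _ 1 n]) auto
  have "W * transpose_mat ?E = V * (transpose_mat (inv_mat ?E) * transpose_mat ?E)"
    unfolding W_def using inv(1) exp_mat_carrier
    by (intro assoc_mult_mat[of _ 1 n _ n _ n]) (auto simp: V_def)
  also have "transpose_mat (inv_mat ?E) * transpose_mat ?E = 1\<^sub>m n"
    using transpose_mult[OF exp_mat_carrier[of n a] inv(1)] inv(2) by simp
  finally have WE: "W * transpose_mat ?E = V" by (simp add: V_def)
  have omega: "omega n a k i = W $$ (0, i - 1)" for i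
    by (simp add: omega_def W_def V_def)
  have eq: "rat_of_int (a (j + 1)) * W $$ (0, j) + (if j + 1 < n then W $$ (0, j + 1) else 0)
      = rat_of_int (k (j + 1)) + 1" if "j < n" for j
    using row_mult_transpose_exp_mat[OF W that, of a] WE that by (simp add: V_def)
  show ?thesis
    unfolding solves_chain_def
  proof
    show "\<forall>i\<in>{1..<n}. rat_of_int (a i) * omega n a k i + omega n a k (i + 1) = rat_of_int (k i) + 1"
    proof
      fix i assume i: "i \<in> {1..<n}"
      then have "i - 1 + 1 = i" by simp
      then show "rat_of_int (a i) * omega n a k i + omega n a k (i + 1) = rat_of_int (k i) + 1"
        using eq[of "i - 1"] i by (simp add: omega)
    qed
    have "n - 1 + 1 = n" using \<open>n \<ge> 1\<close> by simp
    then show "rat_of_int (a n) * omega n a k n = rat_of_int (k n) + 1"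
      using eq[of "n - 1"] \<open>n \<ge> 1\<close> by (simp add: omega)
  qed
qed

theorem proposition2p12:
  fixes n :: nat and a k :: "nat \<Rightarrow> int"
  assumes "n \<ge> 1"
    and "\<forall>i\<in>{1..n}. a i \<ge> 2"
    and "\<forall>i\<in>{1..n-1}. 0 \<le> k i \<and> k i \<le> a i - 1"
    and "0 \<le> k n" and "k n \<le> a n - 2"
  shows "(\<forall>i\<in>{1..n}. 0 < omega n a k i \<and> omega n a k i < 1) \<and>
         (\<forall>i\<in>{1..n}. omega n a
             (\<lambda>j. (if j = n then a n - 2 else a j - 1) - k j) i = 1 - omega n a k i)"
proof -
  let ?k' = "\<lambda>j. (if j = n then a n - 2 else a j - 1) - k j"
  have a: "\<forall>i\<in>{1..n}. a i \<noteq> 0" using assms(2) by force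
  have \<omega>: "solves_chain n a k (omega n a k)"
    and \<omega>': "solves_chain n a ?k' (omega n a ?k')"
    using omega_solves_chain[OF assms(1) a] by blast+
  show ?thesis
    using solves_chain_bounds[OF assms(2-5) \<omega>]
      solves_chain_unique[OF a \<omega>' solves_chain_complement[OF \<omega>]] by blast
qed

end
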